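(* Let $n\ge2$, $k\ge2$. Denote by $\partial_k$ the graph distance in $H_{n,k}$ and by $\partial_{k-1}$ the graph distance in $H_{n,k-1}$; let $\mathbf r'=0^{k-1}$ be the root of $H_{n,k-1}$ and $P'$ its set of peripheral vertices. For $\mathbf x',\mathbf y'\in\mathbb{Z}_n^{k-1}$ and $\alpha,\beta\in\mathbb{Z}_n$ write $\alpha\mathbf x'$ for the vertex of $H_{n,k}$ obtained by prepending $\alpha$. Then: (a) for every $\alpha\in\mathbb{Z}_n$, $\partial_k(\alpha\mathbf x',\alpha\mathbf y')=\partial_{k-1}(\mathbf x',\mathbf y')$; (b) for every $\alpha\neq0$, $\partial_k(0\mathbf x',\alpha\mathbf y')=\partial_{k-1}(\mathbf x',\mathbf r')+1+\partial_{k-1}(\mathbf y',P')$; (c) for all $\alpha,\beta\neq0$ with $\alpha\ne\beta$, $$\partial_k(\alpha\mathbf x',\beta\mathbf y')=\min\{\partial_{k-1}(\mathbf x',P')+2+\partial_{k-1}(\mathbf y',P'),\ \partial_{k-1}(\mathbf x',\mathbf r')+1+\partial_{k-1}(\mathbf r',\mathbf y')\}.$$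
   Context: Let $n\ge 2$ and $k\ge 1$ be integers. $H_{n,k}$ is the simple undirected graph with vertex set $V_{n,k}=\mathbb{Z}_n^k$ (so $|V_{n,k}|=n^k$), whose vertices are written as strings $x_1x_2\ldots x_k$ with $x_j\in\mathbb{Z}_n=\{0,1,\ldots,n-1\}$. Two distinct vertices are adjacent if and only if they are related by one of the following rules. For $i=0$ the prefix $x_1\ldots x_i$ is empty, and "$0\ldots0$" denotes a string of zeros completing the word to length $k$. (R1) $x_1\ldots x_{k-1}x_k\sim x_1\ldots x_{k-1}y_k$ whenever $y_k\neq x_k$. (R2) For $0\le i\le k-2$: $x_1\ldots x_i0\ldots0\sim x_1\ldots x_ix_{i+1}\ldots x_k$ whenever $x_j\neq 0$ for all $i+1\le j\le k$. (R3) For $1\le i\le k-1$: $x_1\ldots x_{i-1}x_i0\ldots0\sim x_1\ldots x_{i-1}y_i0\ldots0$ whenever $x_i,y_i\neq0$ and $x_i\ne y_i$. In particular, $H_{n,1}$ is the complete graph $K_n$. The root of $H_{n,k}$ is $\mathbf r=00\ldots0$; a vertex of $H_{n,k}$ is peripheral if all its coordinates are nonzero, and $P$ denotes the set of peripheral vertices. For a vertex $\mathbf x$ and a vertex set $U$, $\partial(\mathbf x,U)=\min_{\mathbf u\in U}\partial(\mathbf x,\mathbf u)$. *)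

theory Defs
  imports Main
begin

text \<open>Vertices of H(n,k): words of length k over {0,...,n-1}, represented as lists;
  position j of the list (0-indexed) is the coordinate x_{j+1}.\<close>

definition verts :: "nat \<Rightarrow> nat \<Rightarrow> nat list set" where
  "verts n k = {xs. length xs = k \<and> set xs \<subseteq> {..<n}}"

definition R1 :: "nat \<Rightarrow> nat list \<Rightarrow> nat list \<Rightarrow> bool" where
  "R1 k x y \<longleftrightarrow> take (k - 1) x = take (k - 1) y \<and> x \<noteq> y"

text \<open>Rule R2 (one direction): x_1..x_i 0..0 ~ x_1..x_i x_{i+1}..x_k with x_{i+1},...,x_k all nonzero,
  for 0 <= i <= k-2.\<close>
definition R2 :: "nat \<Rightarrow> nat list \<Rightarrow> nat list \<Rightarrow> bool" where
  "R2 k x y \<longleftrightarrow> (\<exists>i. i + 2 \<le> k \<and> x = take i y @ replicate (k - i) 0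
                        \<and> (\<forall>j. i \<le> j \<and> j < k \<longrightarrow> y ! j \<noteq> 0))"

definition R3 :: "nat \<Rightarrow> nat list \<Rightarrow> nat list \<Rightarrow> bool" where
  "R3 k x y \<longleftrightarrow> (\<exists>i p a b. 1 \<le> i \<and> i \<le> k - 1 \<and> length p = i - 1 \<and>
                        a \<noteq> 0 \<and> b \<noteq> 0 \<and> a \<noteq> b \<and>
                        x = p @ [a] @ replicate (k - i) 0 \<and> y = p @ [b] @ replicate (k - i) 0)"

definition adj :: "nat \<Rightarrow> nat \<Rightarrow> nat list \<Rightarrow> nat list \<Rightarrow> bool" where
  "adj n k x y \<longleftrightarrow> x \<in> verts n k \<and> y \<in> verts n k \<and> x \<noteq> y \<and>
                  (R1 k x y \<or> R2 k x y \<or> R2 k y x \<or> R3 k x y)"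

text \<open>Graph distance: length of a shortest walk (the graph is connected).\<close>
definition gdist :: "nat \<Rightarrow> nat \<Rightarrow> nat list \<Rightarrow> nat list \<Rightarrow> nat" where
  "gdist n k x y = (LEAST m. (adj n k ^^ m) x y)"

definition root :: "nat \<Rightarrow> nat list" where
  "root k = replicate k 0"

definition periph :: "nat \<Rightarrow> nat \<Rightarrow> nat list set" where
  "periph n k = {x \<in> verts n k. \<forall>j < k. x ! j \<noteq> 0}"

definition setdist :: "nat \<Rightarrow> nat \<Rightarrow> nat list \<Rightarrow> nat list set \<Rightarrow> nat" where
  "setdist n k x U = Min (gdist n k x ` U)"

end

theory Submission
  imports Defs
begin

text \<open>An edge of \<open>H(n,K+1)\<close> either keeps the first letter, and is then an edge of \<open>H(n,K)\<close>
  on the tails, or it is \<open>0 0\<^sup>K \<sim> c p\<close> with \<open>p\<close> peripheral, or \<open>c 0\<^sup>K \<sim> d 0\<^sup>K\<close>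
  (\<open>c, d \<noteq> 0\<close>). Hence a walk between words with different first letters passes through these
  vertices, and concatenating shortest walks gives the upper bounds. For the lower bounds, the
  claimed distance from a fixed vertex, suitably extended to all vertices, changes by at most one
  along every edge, so it is bounded by the graph distance.\<close>

lemma verts_Cons_iff: "a # x \<in> verts n (Suc K) \<longleftrightarrow> a < n \<and> x \<in> verts n K"
  by (auto simp: verts_def)

lemma length_verts: "x \<in> verts n K \<Longrightarrow> length x = K"
  by (simp add: verts_def)

lemma root_in_verts: "0 < n \<Longrightarrow> root K \<in> verts n K"
  by (auto simp: verts_def root_def)

lemma periph_in_verts: "p \<in> periph n K \<Longrightarrow> p \<in> verts n K"
  by (simp add: periph_def)

lemma replicate_1_in_periph: "2 \<le> n \<Longrightarrow> replicate K 1 \<in> periph n K"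
  by (auto simp: periph_def verts_def)

lemma finite_periph: "finite (periph n K)"
proof -
  have "verts n K = {xs. set xs \<subseteq> {..<n} \<and> length xs = K}"
    by (auto simp: verts_def)
  then have "finite (verts n K)"
    using finite_lists_length_eq[of "{..<n}" K] by simp
  then show ?thesis
    by (rule rev_finite_subset) (auto simp: periph_def)
qed

section \<open>Edges of \<open>H(n,K+1)\<close> in terms of \<open>H(n,K)\<close>\<close>

lemma R1_Cons_iff: "K \<ge> 1 \<Longrightarrow> R1 (Suc K) (a # x) (b # y) \<longleftrightarrow> a = b \<and> R1 K x y"
  by (cases K) (auto simp: R1_def)

lemma R2_Cons_iff:
  assumes "K \<ge> 1"
  shows "R2 (Suc K) (a # x) (b # y) \<longleftrightarrow>
     (a = 0 \<and> x = replicate K 0 \<and> b \<noteq> 0 \<and> (\<forall>j<K. y ! j \<noteq> 0)) \<or> (a = b \<and> R2 K x y)"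
proof
  assume "R2 (Suc K) (a # x) (b # y)"
  then obtain i where i: "i + 2 \<le> Suc K" "a # x = take i (b # y) @ replicate (Suc K - i) 0"
      and nz: "\<forall>j. i \<le> j \<and> j < Suc K \<longrightarrow> (b # y) ! j \<noteq> 0"
    unfolding R2_def by blast
  show "(a = 0 \<and> x = replicate K 0 \<and> b \<noteq> 0 \<and> (\<forall>j<K. y ! j \<noteq> 0)) \<or> (a = b \<and> R2 K x y)"
  proof (cases i)
    case 0
    have "\<forall>j<K. y ! j \<noteq> 0"
      using nz 0 by (metis Suc_less_eq le0 nth_Cons_Suc)
    then show ?thesis using i nz 0 by auto
  next
    case (Suc i')
    have "R2 K x y" unfolding R2_def
    proof (intro exI[of _ i'] conjI allI impI)
      show "i' + 2 \<le> K" "x = take i' y @ replicate (K - i') 0"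
        using i Suc by simp_all
      fix j assume "i' \<le> j \<and> j < K"
      then show "y ! j \<noteq> 0" using nz[rule_format, of "Suc j"] Suc by simp
    qed
    then show ?thesis using i Suc by simp
  qed
next
  assume "(a = 0 \<and> x = replicate K 0 \<and> b \<noteq> 0 \<and> (\<forall>j<K. y ! j \<noteq> 0)) \<or> (a = b \<and> R2 K x y)"
  then show "R2 (Suc K) (a # x) (b # y)"
  proof
    assume h: "a = 0 \<and> x = replicate K 0 \<and> b \<noteq> 0 \<and> (\<forall>j<K. y ! j \<noteq> 0)"
    show ?thesis unfolding R2_def
    proof (intro exI[of _ 0] conjI allI impI)
      fix j assume "0 \<le> j \<and> j < Suc K"
      then show "(b # y) ! j \<noteq> 0" using h by (cases j) auto
    qed (use h assms in simp_all)
  next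
    assume "a = b \<and> R2 K x y"
    then obtain i where ab: "a = b" and i: "i + 2 \<le> K" "x = take i y @ replicate (K - i) 0"
        "\<forall>j. i \<le> j \<and> j < K \<longrightarrow> y ! j \<noteq> 0"
      unfolding R2_def by blast
    show ?thesis unfolding R2_def
    proof (intro exI[of _ "Suc i"] conjI allI impI)
      fix j assume "Suc i \<le> j \<and> j < Suc K"
      then show "(b # y) ! j \<noteq> 0" using i by (cases j) auto
    qed (use i ab in simp_all)
  qed
qed

lemma R3_Cons_iff:
  assumes "K \<ge> 1"
  shows "R3 (Suc K) (a # x) (b # y) \<longleftrightarrow>
     (a \<noteq> 0 \<and> b \<noteq> 0 \<and> a \<noteq> b \<and> x = replicate K 0 \<and> y = replicate K 0) \<or> (a = b \<and> R3 K x y)"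
proof
  assume "R3 (Suc K) (a # x) (b # y)"
  then obtain i p c d where i: "1 \<le> i" "i \<le> K" "length p = i - 1" "c \<noteq> 0" "d \<noteq> 0" "c \<noteq> d"
      "a # x = p @ [c] @ replicate (Suc K - i) 0" "b # y = p @ [d] @ replicate (Suc K - i) 0"
    unfolding R3_def by auto
  show "(a \<noteq> 0 \<and> b \<noteq> 0 \<and> a \<noteq> b \<and> x = replicate K 0 \<and> y = replicate K 0) \<or> (a = b \<and> R3 K x y)"
  proof (cases p)
    case Nil
    then show ?thesis using i by simp
  next
    case (Cons q p')
    then obtain i' where ii: "i = Suc (Suc i')" using i by (cases i; cases "i - 1") auto
    have "R3 K x y" unfolding R3_def
      by (rule exI[of _ "Suc i'"], rule exI[of _ p'], rule exI[of _ c], rule exI[of _ d])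
        (use i Cons ii in simp)
    then show ?thesis using i Cons by simp
  qed
next
  assume "(a \<noteq> 0 \<and> b \<noteq> 0 \<and> a \<noteq> b \<and> x = replicate K 0 \<and> y = replicate K 0) \<or> (a = b \<and> R3 K x y)"
  then show "R3 (Suc K) (a # x) (b # y)"
  proof
    assume h: "a \<noteq> 0 \<and> b \<noteq> 0 \<and> a \<noteq> b \<and> x = replicate K 0 \<and> y = replicate K 0"
    show ?thesis unfolding R3_def
      by (rule exI[of _ 1], rule exI[of _ "[]"], rule exI[of _ a], rule exI[of _ b])
        (use h assms in simp)
  next
    assume "a = b \<and> R3 K x y"
    then obtain i p c d where ab: "a = b" and i: "1 \<le> i" "i \<le> K - 1" "length p = i - 1"
        "c \<noteq> 0" "d \<noteq> 0" "c \<noteq> d"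
        "x = p @ [c] @ replicate (K - i) 0" "y = p @ [d] @ replicate (K - i) 0"
      unfolding R3_def by auto
    show ?thesis unfolding R3_def
      by (rule exI[of _ "Suc i"], rule exI[of _ "a # p"], rule exI[of _ c], rule exI[of _ d])
        (use i ab in \<open>cases i; auto\<close>)
  qed
qed

lemma adj_Cons_iff:
  assumes "K \<ge> 1"
  shows "adj n (Suc K) (a # x) (b # y) \<longleftrightarrow> a < n \<and> b < n \<and>
     ((a = b \<and> adj n K x y)
      \<or> (a = 0 \<and> b \<noteq> 0 \<and> x = root K \<and> y \<in> periph n K)
      \<or> (b = 0 \<and> a \<noteq> 0 \<and> y = root K \<and> x \<in> periph n K)
      \<or> (a \<noteq> 0 \<and> b \<noteq> 0 \<and> a \<noteq> b \<and> x = root K \<and> y = root K))" (is "?lhs \<longleftrightarrow> ?rhs")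
proof (cases "a < n \<and> b < n \<and> x \<in> verts n K \<and> y \<in> verts n K")
  case True
  then have l: "length x = K" "length y = K" and "root K \<in> verts n K"
    by (auto simp: length_verts root_in_verts)
  have "?lhs \<longleftrightarrow> a # x \<noteq> b # y \<and> (R1 (Suc K) (a # x) (b # y) \<or> R2 (Suc K) (a # x) (b # y)
      \<or> R2 (Suc K) (b # y) (a # x) \<or> R3 (Suc K) (a # x) (b # y))"
    unfolding adj_def verts_Cons_iff using True by simp
  also have "\<dots> \<longleftrightarrow> ?rhs"
    unfolding R1_Cons_iff[OF assms] R2_Cons_iff[OF assms] R3_Cons_iff[OF assms]
    using True \<open>root K \<in> verts n K\<close> l unfolding adj_def periph_def root_def by auto
  finally show ?thesis .
next
  case False
  then show ?thesis
    using root_in_verts[of n K] unfolding adj_def verts_Cons_iff periph_def by auto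
qed

lemma adj_sym: "adj n k x y \<Longrightarrow> adj n k y x"
  unfolding adj_def R1_def R3_def by (simp, metis)

lemma root_adj_periph:
  assumes "K \<ge> 1" "p \<in> periph n K"
  shows "adj n K (root K) p"
proof -
  have p: "p \<in> verts n K" "\<forall>j<K. p ! j \<noteq> 0"
    using assms(2) by (auto simp: periph_def)
  then have "p ! 0 < n"
    using assms(1) nth_mem[of 0 p] by (auto simp: verts_def subset_iff)
  then have "root K \<in> verts n K"
    using root_in_verts by auto
  moreover have "root K \<noteq> p"
    using p assms(1) by (auto simp: root_def)
  moreover have "R1 K (root K) p \<or> R2 K (root K) p"
  proof (cases "K = 1")
    case True
    then show ?thesis using \<open>root K \<noteq> p\<close> by (simp add: R1_def)
  next
    case False
    then have "R2 K (root K) p"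
      unfolding R2_def using assms(1) p by (intro exI[of _ 0]) (auto simp: root_def)
    then show ?thesis ..
  qed
  ultimately show ?thesis
    using p unfolding adj_def by auto
qed

lemma walk_sym: "(adj n k ^^ m) x y \<Longrightarrow> (adj n k ^^ m) y x"
proof (induction m arbitrary: y)
  case (Suc m)
  from Suc.prems obtain z where "(adj n k ^^ m) x z" "adj n k z y"
    by (rule relpowp_Suc_E)
  then show ?case
    using Suc.IH adj_sym relpowp_Suc_I2 by metis
qed simp

lemma walk_Cons:
  assumes "K \<ge> 1" "a < n" "(adj n K ^^ m) x y"
  shows "(adj n (Suc K) ^^ m) (a # x) (a # y)"
  using assms(3)
proof (induction m arbitrary: y)
  case (Suc m)
  from Suc.prems obtain z where "(adj n K ^^ m) x z" "adj n K z y"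
    by (rule relpowp_Suc_E)
  then show ?case
    using Suc.IH adj_Cons_iff[OF assms(1)] assms(2) relpowp_Suc_I by metis
qed simp

lemma walk_to_root: "x \<in> verts n K \<Longrightarrow> \<exists>m. (adj n K ^^ m) x (root K)"
proof (induction K arbitrary: x)
  case 0
  then show ?case
    by (intro exI[of _ 0]) (simp add: verts_def root_def)
next
  case (Suc K)
  then obtain a x' where x: "x = a # x'" "a < n" "x' \<in> verts n K"
    by (cases x) (auto simp: verts_def)
  consider "a = 0" | "a \<noteq> 0" "K = 0" | "a \<noteq> 0" "K \<ge> 1"
    by linarith
  then show ?case
  proof cases
    case 1
    obtain m where "(adj n K ^^ m) x' (root K)"
      using Suc.IH x(3) by blast
    then have "K \<ge> 1 \<Longrightarrow> (adj n (Suc K) ^^ m) x (root (Suc K))"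
      using walk_Cons x 1 by (simp add: root_def)
    moreover have "K = 0 \<Longrightarrow> x = root (Suc K)"
      using x 1 by (simp add: verts_def root_def)
    ultimately show ?thesis
      by (metis relpowp_0_I less_one not_less)
  next
    case 2
    then have "adj n (Suc K) x (root (Suc K))"
      using x unfolding adj_def R1_def by (auto simp: root_def verts_def)
    then show ?thesis
      by (metis relpowp_1)
  next
    case 3
    obtain m where "(adj n K ^^ m) x' (root K)"
      using Suc.IH x(3) by blast
    then have to_a0: "(adj n (Suc K) ^^ m) x (a # root K)"
      using walk_Cons 3 x by simp
    \<comment> \<open>from \<open>a0\<^sup>K\<close> go to the peripheral vertex \<open>a1\<^sup>K\<close>, which is adjacent to the root\<close>
    have "2 \<le> n"
      using 3 x by linarith
    then have one_periph: "replicate K 1 \<in> periph n K"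
      by (rule replicate_1_in_periph)
    have "adj n (Suc K) (a # root K) (a # replicate K 1)"
      using adj_Cons_iff[OF 3(2)] x root_adj_periph[OF 3(2) one_periph] by simp
    moreover have "adj n (Suc K) (a # replicate K 1) (root (Suc K))"
      using adj_Cons_iff[OF 3(2)] x 3 one_periph \<open>2 \<le> n\<close> by (simp add: root_def)
    ultimately show ?thesis
      using to_a0 by (metis relpowp_Suc_I)
  qed
qed

lemma walk_exists: "x \<in> verts n K \<Longrightarrow> y \<in> verts n K \<Longrightarrow> \<exists>m. (adj n K ^^ m) x y"
  using walk_to_root walk_sym relpowp_trans by metis

lemma gdist_le: "(adj n k ^^ m) x y \<Longrightarrow> gdist n k x y \<le> m"
  unfolding gdist_def by (rule Least_le)

lemma gdist_walk: "x \<in> verts n K \<Longrightarrow> y \<in> verts n K \<Longrightarrow> (adj n K ^^ gdist n K x y) x y"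
  unfolding gdist_def using walk_exists by (metis LeastI)

lemma gdist_self: "gdist n k x x = 0"
  using gdist_le[where m = 0] by fastforce

lemma gdist_adj_le: "adj n k x y \<Longrightarrow> gdist n k x y \<le> 1"
  using gdist_le[where m = 1] by fastforce

lemma gdist_triangle:
  assumes "x \<in> verts n K" "y \<in> verts n K" "z \<in> verts n K"
  shows "gdist n K x z \<le> gdist n K x y + gdist n K y z"
  using gdist_le[OF relpowp_trans[OF gdist_walk gdist_walk]] assms by blast

lemma gdist_sym: "x \<in> verts n K \<Longrightarrow> y \<in> verts n K \<Longrightarrow> gdist n K x y = gdist n K y x"
  using gdist_le[OF walk_sym[OF gdist_walk]] by (metis antisym)

lemma gdist_step:
  assumes "x \<in> verts n K" "adj n K v w"
  shows "gdist n K x w \<le> gdist n K x v + 1"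
  using gdist_triangle[OF assms(1), of v w] gdist_adj_le[OF assms(2)] assms(2)
  by (fastforce simp: adj_def)

lemma gdist_Cons_le:
  assumes "K \<ge> 1" "a < n" "x \<in> verts n K" "y \<in> verts n K"
  shows "gdist n (Suc K) (a # x) (a # y) \<le> gdist n K x y"
  using gdist_le[OF walk_Cons[OF assms(1,2) gdist_walk[OF assms(3,4)]]] .

lemma le_gdist_if_step_le:
  assumes step: "\<And>u v. adj n K u v \<Longrightarrow> F v \<le> F u + (1::nat)"
    and "x \<in> verts n K" "y \<in> verts n K"
  shows "F y \<le> F x + gdist n K x y"
proof -
  have "(adj n K ^^ m) x z \<Longrightarrow> F z \<le> F x + m" for m z
  proof (induction m arbitrary: z)
    case (Suc m)
    from Suc.prems obtain w where "(adj n K ^^ m) x w" "adj n K w z"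
      by (rule relpowp_Suc_E)
    then show ?case
      using Suc.IH step by fastforce
  qed simp
  then show ?thesis
    using gdist_walk assms(2,3) by blast
qed

section \<open>Distance to the peripheral vertices\<close>

lemma setdist_le: "q \<in> periph n K \<Longrightarrow> setdist n K z (periph n K) \<le> gdist n K z q"
  unfolding setdist_def using finite_periph by simp

lemma setdist_attained:
  assumes "2 \<le> n"
  obtains q where "q \<in> periph n K" "setdist n K z (periph n K) = gdist n K z q"
proof -
  have "periph n K \<noteq> {}"
    using replicate_1_in_periph[OF assms] by blast
  then have "Min (gdist n K z ` periph n K) \<in> gdist n K z ` periph n K"
    using finite_periph by (intro Min_in) auto
  then show ?thesis
    using that unfolding setdist_def by auto
qed

lemma setdist_periph: "q \<in> periph n K \<Longrightarrow> setdist n K q (periph n K) = 0"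
  using setdist_le[of q n K q] gdist_self by simp

lemma setdist_step:
  assumes "2 \<le> n" "adj n K v w"
  shows "setdist n K w (periph n K) \<le> setdist n K v (periph n K) + 1"
proof -
  obtain q where q: "q \<in> periph n K" "setdist n K v (periph n K) = gdist n K v q"
    using setdist_attained[OF assms(1)] .
  have "v \<in> verts n K" "w \<in> verts n K"
    using assms(2) by (auto simp: adj_def)
  then have "gdist n K w q \<le> gdist n K v q + 1"
    using gdist_step[OF periph_in_verts[OF q(1)] assms(2)] gdist_sym periph_in_verts[OF q(1)]
    by metis
  then show ?thesis
    using setdist_le[OF q(1), of w] q(2) by simp
qed

lemma gdist_periph_le_gdist_root:
  assumes "K \<ge> 1" "x \<in> verts n K" "p \<in> periph n K"
  shows "gdist n K x p \<le> gdist n K x (root K) + 1"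
  using root_adj_periph[OF assms(1,3)] gdist_step[OF assms(2)] by blast

lemma gdist_root_le_setdist:
  assumes "2 \<le> n" "K \<ge> 1" "x \<in> verts n K"
  shows "gdist n K x (root K) \<le> setdist n K x (periph n K) + 1"
proof -
  obtain q where q: "q \<in> periph n K" "setdist n K x (periph n K) = gdist n K x q"
    using setdist_attained[OF assms(1)] .
  show ?thesis
    using gdist_step[OF assms(3) adj_sym[OF root_adj_periph[OF assms(2) q(1)]]] q(2) by simp
qed

lemma setdist_le_gdist_root:
  assumes "2 \<le> n" "K \<ge> 1" "x \<in> verts n K"
  shows "setdist n K x (periph n K) \<le> gdist n K x (root K) + 1"
  using setdist_le[OF replicate_1_in_periph[OF assms(1)]]
    gdist_periph_le_gdist_root[OF assms(2,3) replicate_1_in_periph[OF assms(1)]]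
  by (meson le_trans)

section \<open>Lower bounds\<close>

lemma le_gdist_Cons_if_step_le:
  assumes "K \<ge> 1" "a < n" "b < n" "x \<in> verts n K" "z \<in> verts n K"
    and same: "\<And>c v w. c < n \<Longrightarrow> adj n K v w \<Longrightarrow> G c w \<le> G c v + (1::nat)"
    and periph: "\<And>c p. c < n \<Longrightarrow> c \<noteq> 0 \<Longrightarrow> p \<in> periph n K \<Longrightarrow>
               G c p \<le> G 0 (root K) + 1 \<and> G 0 (root K) \<le> G c p + 1"
    and roots: "\<And>c d. c < n \<Longrightarrow> d < n \<Longrightarrow> c \<noteq> 0 \<Longrightarrow> d \<noteq> 0 \<Longrightarrow> c \<noteq> d \<Longrightarrow>
               G d (root K) \<le> G c (root K) + 1"
  shows "G b z \<le> G a x + gdist n (Suc K) (a # x) (b # z)"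
proof -
  have "G (hd v) (tl v) \<le> G (hd u) (tl u) + 1" if uv: "adj n (Suc K) u v" for u v
  proof -
    obtain c v' d w' where "u = c # v'" "v = d # w'"
      using uv by (cases u; cases v) (auto simp: adj_def verts_def)
    then show ?thesis
      using uv adj_Cons_iff[OF assms(1)] same periph roots by auto
  qed
  from le_gdist_if_step_le[of n "Suc K" "\<lambda>v. G (hd v) (tl v)", OF this, of "a # x" "b # z"]
  show ?thesis
    using assms(2-5) by (simp add: verts_Cons_iff)
qed

lemma gdist_from_zero_ge:
  assumes "2 \<le> n" "K \<ge> 1" "b < n" "x \<in> verts n K" "z \<in> verts n K"
  shows "(if b = 0 then gdist n K x z
          else gdist n K x (root K) + 1 + setdist n K z (periph n K))
         \<le> gdist n (Suc K) (0 # x) (b # z)"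
  using le_gdist_Cons_if_step_le[OF assms(2) _ assms(3-5), where a = 0 and
      G = "\<lambda>c z. if c = 0 then gdist n K x z
                  else gdist n K x (root K) + 1 + setdist n K z (periph n K)"]
    gdist_step[OF assms(4)] setdist_step[OF assms(1)] setdist_periph assms(1)
  by (simp add: gdist_self)

lemma gdist_from_nonzero_ge:
  assumes "2 \<le> n" "K \<ge> 1" "\<alpha> < n" "\<alpha> \<noteq> 0" "b < n" "x \<in> verts n K" "z \<in> verts n K"
  defines "c \<equiv> gdist n K x (root K)" and "e \<equiv> setdist n K x (periph n K)"
  shows "(if b = \<alpha> then gdist n K x z
          else if b = 0 then e + 1 + gdist n K (root K) z
          else min (e + 2 + setdist n K z (periph n K)) (c + 1 + gdist n K (root K) z))
         \<le> gdist n (Suc K) (\<alpha> # x) (b # z)"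
proof -
  have root: "root K \<in> verts n K"
    using assms(1) root_in_verts by simp
  have "c \<le> e + 1" "e \<le> c + 1"
    unfolding c_def e_def
    using gdist_root_le_setdist setdist_le_gdist_root assms(1,2,6) by auto
  moreover have "gdist n K x p \<le> c + 1" "e \<le> gdist n K x p" if "p \<in> periph n K" for p
    unfolding c_def e_def using gdist_periph_le_gdist_root setdist_le assms(2,6) that by auto
  ultimately show ?thesis
    using le_gdist_Cons_if_step_le[OF assms(2,3,5,6,7), where
        G = "\<lambda>b z. if b = \<alpha> then gdist n K x z
             else if b = 0 then e + 1 + gdist n K (root K) z
             else min (e + 2 + setdist n K z (periph n K)) (c + 1 + gdist n K (root K) z)"]
      gdist_step[OF assms(6)] gdist_step[OF root] setdist_step[OF assms(1)] setdist_periph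
      assms(4)
    by (fastforce simp: gdist_self c_def)
qed

lemma gdist_Cons_same:
  assumes "2 \<le> n" "K \<ge> 1" "\<alpha> < n" "x \<in> verts n K" "y \<in> verts n K"
  shows "gdist n (Suc K) (\<alpha> # x) (\<alpha> # y) = gdist n K x y"
proof (rule antisym)
  show "gdist n (Suc K) (\<alpha> # x) (\<alpha> # y) \<le> gdist n K x y"
    using gdist_Cons_le assms(2-5) .
  show "gdist n K x y \<le> gdist n (Suc K) (\<alpha> # x) (\<alpha> # y)"
    using gdist_from_zero_ge[OF assms(1,2,3,4,5)] gdist_from_nonzero_ge[OF assms(1,2,3) _ assms(3,4,5)]
    by (cases "\<alpha> = 0") auto
qed

lemma gdist_zero_Cons_nonzero:
  assumes "2 \<le> n" "K \<ge> 1" "\<alpha> < n" "\<alpha> \<noteq> 0" "x \<in> verts n K" "y \<in> verts n K"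
  shows "gdist n (Suc K) (0 # x) (\<alpha> # y) =
    gdist n K x (root K) + 1 + setdist n K y (periph n K)"
proof (rule antisym)
  obtain q where q: "q \<in> periph n K" "setdist n K y (periph n K) = gdist n K y q"
    using setdist_attained[OF assms(1)] .
  have vs: "0 # x \<in> verts n (Suc K)" "0 # root K \<in> verts n (Suc K)"
    "\<alpha> # q \<in> verts n (Suc K)" "\<alpha> # y \<in> verts n (Suc K)"
    using assms q(1) root_in_verts by (auto simp: verts_Cons_iff periph_in_verts)
  have "gdist n (Suc K) (0 # x) (\<alpha> # y)
      \<le> gdist n (Suc K) (0 # x) (0 # root K) + gdist n (Suc K) (0 # root K) (\<alpha> # q)
        + gdist n (Suc K) (\<alpha> # q) (\<alpha> # y)"
    using gdist_triangle vs by (meson add_mono le_trans order_refl)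
  also have "\<dots> \<le> gdist n K x (root K) + 1 + gdist n K q y"
    using gdist_Cons_le[OF assms(2)] gdist_adj_le adj_Cons_iff[OF assms(2)] assms q(1)
      root_in_verts periph_in_verts
    by (intro add_mono) auto
  finally show "gdist n (Suc K) (0 # x) (\<alpha> # y)
      \<le> gdist n K x (root K) + 1 + setdist n K y (periph n K)"
    using q gdist_sym assms(6) periph_in_verts by metis
  show "gdist n K x (root K) + 1 + setdist n K y (periph n K)
      \<le> gdist n (Suc K) (0 # x) (\<alpha> # y)"
    using gdist_from_zero_ge[OF assms(1,2,3,5,6)] assms(4) by simp
qed

lemma gdist_Cons_distinct_nonzero:
  assumes "2 \<le> n" "K \<ge> 1" "\<alpha> < n" "\<beta> < n" "\<alpha> \<noteq> 0" "\<beta> \<noteq> 0" "\<alpha> \<noteq> \<beta>"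
    and "x \<in> verts n K" "y \<in> verts n K"
  shows "gdist n (Suc K) (\<alpha> # x) (\<beta> # y) =
    min (setdist n K x (periph n K) + 2 + setdist n K y (periph n K))
        (gdist n K x (root K) + 1 + gdist n K (root K) y)"
proof (rule antisym)
  obtain p where p: "p \<in> periph n K" "setdist n K x (periph n K) = gdist n K x p"
    using setdist_attained[OF assms(1)] .
  obtain q where q: "q \<in> periph n K" "setdist n K y (periph n K) = gdist n K y q"
    using setdist_attained[OF assms(1)] .
  have root: "root K \<in> verts n K"
    using assms(1) root_in_verts by simp
  have vs: "\<alpha> # x \<in> verts n (Suc K)" "\<alpha> # p \<in> verts n (Suc K)" "0 # root K \<in> verts n (Suc K)"
    "\<beta> # q \<in> verts n (Suc K)" "\<beta> # y \<in> verts n (Suc K)"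
    "\<alpha> # root K \<in> verts n (Suc K)" "\<beta> # root K \<in> verts n (Suc K)"
    using assms p(1) q(1) root by (auto simp: verts_Cons_iff periph_in_verts)
  have via_periph: "gdist n (Suc K) (\<alpha> # x) (\<beta> # y)
      \<le> gdist n K x p + 1 + 1 + gdist n K q y"
  proof -
    have "gdist n (Suc K) (\<alpha> # x) (\<beta> # y)
        \<le> gdist n (Suc K) (\<alpha> # x) (\<alpha> # p) + gdist n (Suc K) (\<alpha> # p) (0 # root K)
          + gdist n (Suc K) (0 # root K) (\<beta> # q) + gdist n (Suc K) (\<beta> # q) (\<beta> # y)"
      using gdist_triangle vs by (meson add_mono le_trans order_refl)
    also have "\<dots> \<le> gdist n K x p + 1 + 1 + gdist n K q y"
      using gdist_Cons_le[OF assms(2)] gdist_adj_le adj_Cons_iff[OF assms(2)] assms p(1) q(1)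
        periph_in_verts
      by (intro add_mono) auto
    finally show ?thesis .
  qed
  have via_root: "gdist n (Suc K) (\<alpha> # x) (\<beta> # y)
      \<le> gdist n K x (root K) + 1 + gdist n K (root K) y"
  proof -
    have "gdist n (Suc K) (\<alpha> # x) (\<beta> # y)
        \<le> gdist n (Suc K) (\<alpha> # x) (\<alpha> # root K) + gdist n (Suc K) (\<alpha> # root K) (\<beta> # root K)
          + gdist n (Suc K) (\<beta> # root K) (\<beta> # y)"
      using gdist_triangle vs by (meson add_mono le_trans order_refl)
    also have "\<dots> \<le> gdist n K x (root K) + 1 + gdist n K (root K) y"
      using gdist_Cons_le[OF assms(2)] gdist_adj_le adj_Cons_iff[OF assms(2)] assms root
      by (intro add_mono) auto
    finally show ?thesis .
  qed
  have "gdist n K y q = gdist n K q y"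
    using gdist_sym assms(9) periph_in_verts q(1) by blast
  then show "gdist n (Suc K) (\<alpha> # x) (\<beta> # y) \<le>
      min (setdist n K x (periph n K) + 2 + setdist n K y (periph n K))
          (gdist n K x (root K) + 1 + gdist n K (root K) y)"
    using via_periph via_root p(2) q(2) by simp
  show "min (setdist n K x (periph n K) + 2 + setdist n K y (periph n K))
          (gdist n K x (root K) + 1 + gdist n K (root K) y)
      \<le> gdist n (Suc K) (\<alpha> # x) (\<beta> # y)"
    using gdist_from_nonzero_ge[OF assms(1,2,3,5,4,8,9)] assms(6,7) by simp
qed

theorem mainTheorem5:
  fixes n k :: nat
  assumes "n \<ge> 2" and "k \<ge> 2"
  shows "(\<forall>\<alpha><n. \<forall>x'\<in>verts n (k-1). \<forall>y'\<in>verts n (k-1).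
            gdist n k (\<alpha> # x') (\<alpha> # y') = gdist n (k-1) x' y')
       \<and> (\<forall>\<alpha><n. \<forall>x'\<in>verts n (k-1). \<forall>y'\<in>verts n (k-1). \<alpha> \<noteq> 0 \<longrightarrow>
            gdist n k (0 # x') (\<alpha> # y') =
              gdist n (k-1) x' (root (k-1)) + 1 + setdist n (k-1) y' (periph n (k-1)))
       \<and> (\<forall>\<alpha><n. \<forall>\<beta><n. \<forall>x'\<in>verts n (k-1). \<forall>y'\<in>verts n (k-1).
            \<alpha> \<noteq> 0 \<longrightarrow> \<beta> \<noteq> 0 \<longrightarrow> \<alpha> \<noteq> \<beta> \<longrightarrow>
            gdist n k (\<alpha> # x') (\<beta> # y') =
              min (setdist n (k-1) x' (periph n (k-1)) + 2 + setdist n (k-1) y' (periph n (k-1)))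
                  (gdist n (k-1) x' (root (k-1)) + 1 + gdist n (k-1) (root (k-1)) y'))"
proof -
  obtain K where "k = Suc K" "K \<ge> 1"
    using assms(2) by (cases k) auto
  then show ?thesis
    using gdist_Cons_same[OF assms(1)] gdist_zero_Cons_nonzero[OF assms(1)]
      gdist_Cons_distinct_nonzero[OF assms(1)]
    by simp
qed

end
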